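(* Let $X$ and $Y$ be topological vector spaces (over $\mathbb{R}$), let $\theta$ be the origin of $Y$, and let $D$ be a nonempty convex subset of $X$. Let $F: D\times D\rightrightarrows Y$ be a set-valued mapping satisfying: (i) for each $z\in D$, the set $\{x\in D: \theta\in F(x,z)\}$ is compactly closed; (ii) $F$ is a KKM-type mapping on $D$; (iii) for each $y\in D$ there exists $z\in D$ such that for all $x\in D$, $\theta\in F(z,x)$ implies $\theta\in F(x,y)$; (iv) there exist a nonempty compact subset $M$ of $D$ and a finite subset $L$ of $D$ such that for each $x\in D\setminus M$ there exists $y\in L$ with $\theta\notin F(x,y)$. Then there exists $\bar x\in M$ such that $\theta\in F(\bar x,y)$ for all $y\in D$.
   Context: A subset $A$ of a topological space $X$ is compactly closed if for every compact subset $M$ of $X$ the set $A\cap M$ is closed in $M$. A set-valued mapping $F: D\times D\rightrightarrows Y$ is called a KKM-type mapping on $D$ if for every finite subset $\{x_1,\dots,x_n\}\subset D$ and every $x\in \operatorname{co}\{x_1,\dots,x_n\}\cap D$ there exists $j\in\{1,\dots,n\}$ such that $\theta\in F(x_j,x)$. Here $\operatorname{co}$ denotes the convex hull. *)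

theory Defs
  imports "HOL-Analysis.Analysis"
begin

class real_topological_vector = real_vector + topological_space +
  assumes add_continuous_tvs:
    "\<And>S x y. open S \<Longrightarrow> x + y \<in> S \<Longrightarrow>
       \<exists>U V. open U \<and> open V \<and> x \<in> U \<and> y \<in> V \<and> (\<forall>u\<in>U. \<forall>v\<in>V. u + v \<in> S)"
  assumes scaleR_continuous_tvs:
    "\<And>S (c::real) x. open S \<Longrightarrow> c *\<^sub>R x \<in> S \<Longrightarrow>
       \<exists>A U. open A \<and> open U \<and> c \<in> A \<and> x \<in> U \<and> (\<forall>d\<in>A. \<forall>u\<in>U. d *\<^sub>R u \<in> S)"

definition compactly_closed :: "'a::topological_space set \<Rightarrow> bool" where
  "compactly_closed A \<longleftrightarrow> (\<forall>M. compact M \<longrightarrow> closedin (top_of_set M) (A \<inter> M))"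

definition KKM_type :: "'a::real_vector set \<Rightarrow> ('a \<Rightarrow> 'a \<Rightarrow> 'b::zero set) \<Rightarrow> bool" where
  "KKM_type D F \<longleftrightarrow>
     (\<forall>S. finite S \<and> S \<subseteq> D \<longrightarrow>
        (\<forall>x \<in> convex hull S \<inter> D. \<exists>xj \<in> S. 0 \<in> F xj x))"

end

(* Since M is compact, it suffices that the sets {x \<in> M. 0 \<in> F x y}, which are closed in M by
   (i), have the finite intersection property. Given finite Y, condition (iv) puts every common
   zero of the F(-, y) with y \<in> Y \<union> L into M, and such a zero exists by the KKM principle: for
   the points z_y provided by (iii), (ii) says that the convex hull of any {z_y | y \<in> J} is covered
   by the sets {x. 0 \<in> F x y}, y \<in> J. The KKM principle is pulled back to a standard simplex,
   where it follows from Brouwer's fixed point theorem, which in turn follows from the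
   non-contractibility of spheres. *)

theory Submission
  imports Defs "HOL-Homology.Brouwer_Degree"
begin

section \<open>Brouwer's fixed point theorem in coordinates\<close>

definition nball :: "nat \<Rightarrow> (nat \<Rightarrow> real) set" where
  "nball n = {x. (\<Sum>i\<le>n. (x i)\<^sup>2) \<le> 1 \<and> (\<forall>i>n. x i = 0)}"

definition normalise :: "nat \<Rightarrow> (nat \<Rightarrow> real) \<Rightarrow> nat \<Rightarrow> real" where
  "normalise n x = (\<lambda>i. x i / sqrt (\<Sum>j\<le>n. (x j)\<^sup>2))"

lemma continuous_on_coordinate: "continuous_on A (\<lambda>x::'i \<Rightarrow> 'b::topological_space. x i)"
  by (rule continuous_on_subset[OF continuous_on_product_coordinates]) simp

lemma topspace_nsphere_eq:
  "topspace (nsphere n) = {x. (\<Sum>i\<le>n. (x i)\<^sup>2) = 1 \<and> (\<forall>i>n. x i = 0)}"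
  by (simp add: nsphere)

lemma nsphere_eq_top_of_set: "nsphere n = top_of_set (topspace (nsphere n))"
  by (simp add: nsphere euclidean_product_topology)

lemma nsphere_subset_nball: "topspace (nsphere n) \<subseteq> nball n"
  by (auto simp: topspace_nsphere_eq nball_def)

lemma normalise_nsphere: "x \<in> topspace (nsphere n) \<Longrightarrow> normalise n x = x"
  by (simp add: topspace_nsphere_eq normalise_def)

lemma sum_squares_eq_0_iff:
  fixes x :: "nat \<Rightarrow> real"
  assumes "\<forall>i>n. x i = 0"
  shows "(\<Sum>i\<le>n. (x i)\<^sup>2) = 0 \<longleftrightarrow> x = (\<lambda>i. 0)"
proof
  assume "(\<Sum>i\<le>n. (x i)\<^sup>2) = 0"
  then have "\<forall>i\<le>n. x i = 0"
    by (subst (asm) sum_nonneg_eq_0_iff) auto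
  with assms show "x = (\<lambda>i. 0)"
    by (metis not_le)
qed simp

lemma normalise_in_nsphere:
  assumes "x \<noteq> (\<lambda>i. 0)" "\<forall>i>n. x i = 0"
  shows "normalise n x \<in> topspace (nsphere n)"
proof -
  have pos: "(\<Sum>i\<le>n. (x i)\<^sup>2) > 0"
    using assms sum_squares_eq_0_iff[of n x] by (simp add: less_le sum_nonneg)
  have "(\<Sum>i\<le>n. (x i / sqrt (\<Sum>j\<le>n. (x j)\<^sup>2))\<^sup>2) = 1"
    using pos by (simp add: power_divide sum_nonneg flip: sum_divide_distrib)
  then show ?thesis
    using pos assms(2) by (simp add: topspace_nsphere_eq normalise_def)
qed

lemma continuous_on_normalise:
  "continuous_on {x. x \<noteq> (\<lambda>i. 0) \<and> (\<forall>i>n. x i = 0)} (normalise n)"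
  unfolding normalise_def
proof (rule continuous_on_coordinatewise_then_product)
  show "continuous_on {x. x \<noteq> (\<lambda>i. 0) \<and> (\<forall>i>n. x i = 0)} (\<lambda>x. x i / sqrt (\<Sum>j\<le>n. (x j)\<^sup>2))" for i
    by (intro continuous_on_divide continuous_on_real_sqrt continuous_on_sum continuous_on_power continuous_on_coordinate)
      (use sum_squares_eq_0_iff in auto)
qed

lemma homotopic_with_normalise:
  fixes h :: "real \<times> (nat \<Rightarrow> real) \<Rightarrow> nat \<Rightarrow> real"
  assumes cont: "continuous_on ({0..1} \<times> S) h"
    and nonzero: "\<And>p. p \<in> {0..1} \<times> S \<Longrightarrow> h p \<noteq> (\<lambda>i. 0) \<and> (\<forall>i>n. h p i = 0)"
  shows "homotopic_with (\<lambda>_. True) (top_of_set S) (nsphere n)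
           (\<lambda>x. normalise n (h (0, x))) (\<lambda>x. normalise n (h (1, x)))"
  unfolding homotopic_with_def
proof (intro exI conjI)
  have "continuous_on ({0..1} \<times> S) (normalise n \<circ> h)"
    by (rule continuous_on_compose[OF cont continuous_on_subset[OF continuous_on_normalise]])
      (use nonzero in auto)
  moreover have "(normalise n \<circ> h) \<in> {0..1} \<times> S \<rightarrow> topspace (nsphere n)"
    using nonzero normalise_in_nsphere by auto
  ultimately show "continuous_map (prod_topology (top_of_set {0..1}) (top_of_set S)) (nsphere n)
      (normalise n \<circ> h)"
    by (subst nsphere_eq_top_of_set) simp
qed auto

lemma scaled_nball_in_nsphere_imp_1:
  assumes "(\<lambda>i. t * y i) \<in> topspace (nsphere n)" "y \<in> nball n" "0 \<le> t" "t \<le> 1"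
  shows "t = 1"
proof -
  have "1 = (\<Sum>i\<le>n. (t * y i)\<^sup>2)" using assms(1) by (simp add: topspace_nsphere_eq)
  also have "\<dots> = t\<^sup>2 * (\<Sum>i\<le>n. (y i)\<^sup>2)" by (simp add: power_mult_distrib sum_distrib_left)
  also have "\<dots> \<le> t\<^sup>2" using assms(2-) by (simp add: nball_def mult_left_le)
  finally show ?thesis using assms(3,4) by (smt (verit) mult_left_le power2_eq_square)
qed

lemma shrunk_nsphere_in_nball:
  assumes "x \<in> topspace (nsphere n)" "0 \<le> t" "t \<le> 1"
  shows "(\<lambda>i. (1 - t) * x i) \<in> nball n"
proof -
  have "(\<Sum>i\<le>n. ((1 - t) * x i)\<^sup>2) = (1 - t)\<^sup>2"
    using assms(1) by (simp add: power_mult_distrib topspace_nsphere_eq flip: sum_distrib_left)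
  also have "\<dots> \<le> 1" using assms(2,3) by (simp add: power_le_one)
  finally show ?thesis using assms(1) by (simp add: nball_def topspace_nsphere_eq)
qed

lemma homotopic_id_normalised_displacement:
  assumes cont: "continuous_on (nball n) f" and maps: "f \<in> nball n \<rightarrow> nball n"
    and nofix: "\<And>x. x \<in> nball n \<Longrightarrow> f x \<noteq> x"
  shows "homotopic_with (\<lambda>_. True) (nsphere n) (nsphere n) id (\<lambda>x. normalise n (\<lambda>i. x i - f x i))"
proof -
  let ?S = "topspace (nsphere n)"
  define H where "H p = (\<lambda>i. snd p i - fst p * f (snd p) i)" for p :: "real \<times> (nat \<Rightarrow> real)"
  have "continuous_on ({0..1} \<times> ?S) H"
    unfolding H_def
    by (intro continuous_on_coordinatewise_then_product continuous_on_diff continuous_on_mult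
        continuous_on_fst continuous_on_compose2[OF continuous_on_coordinate continuous_on_snd]
        continuous_on_compose2[OF continuous_on_product_then_coordinatewise[OF cont] continuous_on_snd])
      (use nsphere_subset_nball in auto)
  moreover have "H p \<noteq> (\<lambda>i. 0) \<and> (\<forall>i>n. H p i = 0)" if p_in: "p \<in> {0..1} \<times> ?S" for p
  proof -
    obtain t x where p: "p = (t, x)" "t \<in> {0..1}" "x \<in> ?S" using p_in by blast
    then have "f x \<in> nball n" "x \<in> nball n" using maps nsphere_subset_nball by auto
    with p have "x \<noteq> (\<lambda>i. t * f x i)"
      using scaled_nball_in_nsphere_imp_1[of t "f x" n] nofix by force
    then show ?thesis using p \<open>f x \<in> nball n\<close> by (auto simp: H_def fun_eq_iff topspace_nsphere_eq nball_def)
  qed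
  ultimately have "homotopic_with (\<lambda>_. True) (top_of_set ?S) (nsphere n)
      (\<lambda>x. normalise n (H (0, x))) (\<lambda>x. normalise n (H (1, x)))"
    by (rule homotopic_with_normalise)
  then show ?thesis
    by (subst nsphere_eq_top_of_set) (erule homotopic_with_eq; simp add: H_def normalise_nsphere)
qed

text \<open>The normalised displacement extends over the ball, which contracts to the origin.\<close>

lemma nullhomotopic_normalised_displacement:
  assumes cont: "continuous_on (nball n) f" and maps: "f \<in> nball n \<rightarrow> nball n"
    and nofix: "\<And>x. x \<in> nball n \<Longrightarrow> f x \<noteq> x"
  obtains c where "homotopic_with (\<lambda>_. True) (nsphere n) (nsphere n)
    (\<lambda>x. normalise n (\<lambda>i. x i - f x i)) (\<lambda>x. c)"
proof -
  let ?S = "topspace (nsphere n)"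
  define shrink where "shrink p = (\<lambda>i. (1 - fst p) * snd p i)" for p :: "real \<times> (nat \<Rightarrow> real)"
  define H where "H p = (\<lambda>i. shrink p i - f (shrink p) i)" for p
  have shrink: "shrink ` ({0..1} \<times> ?S) \<subseteq> nball n"
    using shrunk_nsphere_in_nball by (auto simp: shrink_def)
  have shrink_cont: "continuous_on ({0..1} \<times> ?S) shrink"
    unfolding shrink_def
    by (intro continuous_on_coordinatewise_then_product continuous_on_mult continuous_on_diff
        continuous_on_const continuous_on_fst continuous_on_compose2[OF continuous_on_coordinate continuous_on_snd])
      auto
  have "continuous_on ({0..1} \<times> ?S) H"
    unfolding H_def
    using continuous_on_product_then_coordinatewise[OF shrink_cont] shrink
      continuous_on_compose2[OF continuous_on_product_then_coordinatewise[OF cont] shrink_cont]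
    by (intro continuous_on_coordinatewise_then_product continuous_on_diff) auto
  moreover have "H p \<noteq> (\<lambda>i. 0) \<and> (\<forall>i>n. H p i = 0)" if "p \<in> {0..1} \<times> ?S" for p
  proof -
    have "shrink p \<in> nball n" using shrink that by blast
    then have "f (shrink p) \<in> nball n" "f (shrink p) \<noteq> shrink p" using maps nofix by auto
    with \<open>shrink p \<in> nball n\<close> show ?thesis by (auto simp: H_def fun_eq_iff nball_def) (metis)
  qed
  ultimately have "homotopic_with (\<lambda>_. True) (top_of_set ?S) (nsphere n)
      (\<lambda>x. normalise n (H (0, x))) (\<lambda>x. normalise n (H (1, x)))"
    by (rule homotopic_with_normalise)
  then show ?thesis
    by (subst (asm) nsphere_eq_top_of_set[symmetric]) (auto simp: H_def shrink_def intro: that)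
qed

lemma brouwer_nball:
  assumes cont: "continuous_on (nball n) f" and maps: "f \<in> nball n \<rightarrow> nball n"
  shows "\<exists>x\<in>nball n. f x = x"
proof (rule ccontr)
  assume "\<not> ?thesis"
  then have nofix: "\<And>x. x \<in> nball n \<Longrightarrow> f x \<noteq> x" by blast
  obtain c where "homotopic_with (\<lambda>_. True) (nsphere n) (nsphere n)
      (\<lambda>x. normalise n (\<lambda>i. x i - f x i)) (\<lambda>x. c)"
    using nullhomotopic_normalised_displacement[OF cont maps nofix] .
  then have "contractible_space (nsphere n)"
    using homotopic_with_trans[OF homotopic_id_normalised_displacement[OF cont maps nofix]]
    unfolding contractible_space_def by blast
  then show False
    using non_contractible_space_nsphere by blast
qed

section \<open>The Knaster--Kuratowski--Mazurkiewicz lemma\<close>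

lemma mem_standard_simplex:
  "x \<in> standard_simplex n \<longleftrightarrow> (\<forall>i. 0 \<le> x i) \<and> (\<forall>i>n. x i = 0) \<and> (\<Sum>i\<le>n. x i) = 1"
proof -
  have "x i \<le> 1" if "\<forall>i. 0 \<le> x i" "\<forall>i>n. x i = 0" "(\<Sum>i\<le>n. x i) = 1" for i
  proof (cases "i \<le> n")
    case True
    then have "x i \<le> (\<Sum>i\<le>n. x i)" by (intro member_le_sum) (use that in auto)
    then show ?thesis using that by simp
  qed (use that in auto)
  then show ?thesis by (auto simp: standard_simplex_def)
qed

lemma standard_simplex_subset_nball: "standard_simplex n \<subseteq> nball n"
proof
  fix x assume x: "x \<in> standard_simplex n"
  have "(\<Sum>i\<le>n. (x i)\<^sup>2) \<le> (\<Sum>i\<le>n. x i)"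
    using x by (intro sum_mono) (auto simp: standard_simplex_def power2_eq_square mult_left_le)
  then show "x \<in> nball n" using x by (simp add: standard_simplex_def nball_def)
qed

lemma standard_simplex_retract_of_nball: "standard_simplex n retract_of nball n"
proof -
  define m where "m x = (\<Sum>i\<le>n. max 0 (x i))" for x :: "nat \<Rightarrow> real"
  define r where "r x = (\<lambda>i. (max 0 (x i) + (if i = 0 then max 0 (1 - m x) else 0)) / max 1 (m x))"
    for x :: "nat \<Rightarrow> real"
  have "r x \<in> standard_simplex n" if "x \<in> nball n" for x
  proof -
    have "(\<Sum>i\<le>n. max 0 (x i) + (if i = 0 then max 0 (1 - m x) else 0)) = max 1 (m x)"
      by (simp add: sum.distrib m_def max_def)
    then have "(\<Sum>i\<le>n. r x i) = 1"
      by (simp add: r_def flip: sum_divide_distrib)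
    then show ?thesis using that by (simp add: mem_standard_simplex r_def nball_def)
  qed
  moreover have "r x = x" if "x \<in> standard_simplex n" for x
  proof -
    have pos: "max 0 (x i) = x i" for i using that by (simp add: mem_standard_simplex)
    then have "m x = 1" using that by (simp add: m_def mem_standard_simplex)
    then show ?thesis unfolding r_def pos by (auto simp: fun_eq_iff)
  qed
  moreover have "continuous_on (nball n) r"
  proof -
    have coord: "continuous_on (nball n) (\<lambda>x. max 0 (x i))" for i
      by (intro continuous_on_max continuous_on_const continuous_on_coordinate)
    then have "continuous_on (nball n) m"
      unfolding m_def by (intro continuous_on_sum) auto
    then have "continuous_on (nball n) (\<lambda>x. if i = 0 then max 0 (1 - m x) else 0)" for i
      by (cases "i = 0") (auto intro!: continuous_on_max continuous_on_const continuous_on_diff)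
    then show ?thesis unfolding r_def
      by (intro continuous_on_coordinatewise_then_product continuous_on_divide continuous_on_add
          coord continuous_on_max continuous_on_const \<open>continuous_on (nball n) m\<close>) auto
  qed
  ultimately show ?thesis
    unfolding retract_of_def retraction_def using standard_simplex_subset_nball by blast
qed

lemma brouwer_standard_simplex:
  assumes "continuous_on (standard_simplex n) f" "f \<in> standard_simplex n \<rightarrow> standard_simplex n"
  obtains x where "x \<in> standard_simplex n" "f x = x"
  using retract_fixpoint_property[OF standard_simplex_retract_of_nball _ assms] brouwer_nball
  by metis

lemma standard_simplex_add_normalise:
  assumes x: "x \<in> standard_simplex n" and d: "\<And>i. 0 \<le> d i"
  shows "(\<lambda>i. if i \<le> n then (x i + d i) / (1 + (\<Sum>j\<le>n. d j)) else 0) \<in> standard_simplex n"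
proof -
  have s: "0 \<le> (\<Sum>j\<le>n. d j)" using d by (simp add: sum_nonneg)
  have "(\<Sum>i\<le>n. (x i + d i) / (1 + (\<Sum>j\<le>n. d j))) = 1"
    using x s by (simp add: mem_standard_simplex sum.distrib flip: sum_divide_distrib)
  then show ?thesis using x d s by (simp add: mem_standard_simplex)
qed

lemma continuous_on_standard_simplex_add_normalise:
  assumes cont: "\<And>i. continuous_on (standard_simplex n) (\<lambda>x. d x i)" and d: "\<And>x i. 0 \<le> d x i"
  shows "continuous_on (standard_simplex n)
           (\<lambda>x i. if i \<le> n then (x i + d x i) / (1 + (\<Sum>j\<le>n. d x j)) else 0)"
proof (rule continuous_on_coordinatewise_then_product)
  fix i
  have "1 + (\<Sum>j\<le>n. d x j) \<noteq> 0" for x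
    using d[of x] by (smt (verit) sum_nonneg)
  then have "continuous_on (standard_simplex n) (\<lambda>x. (x i + d x i) / (1 + (\<Sum>j\<le>n. d x j)))"
    by (intro continuous_on_divide continuous_on_add continuous_on_sum cont continuous_on_const
        continuous_on_coordinate) auto
  then show "continuous_on (standard_simplex n)
      (\<lambda>x. if i \<le> n then (x i + d x i) / (1 + (\<Sum>j\<le>n. d x j)) else 0)"
    by (cases "i \<le> n") auto
qed

text \<open>The self-map \<open>x \<mapsto> (x + d) / (1 + \<Sum>d)\<close> of the simplex, with \<open>d\<^sub>i\<close> the distance to
  \<open>C\<^sub>i\<close>, has a fixed point \<open>x\<close>.
  The covering hypothesis gives \<open>i\<close> with \<open>x\<^sub>i > 0\<close> and \<open>d\<^sub>i x = 0\<close>; the fixed-point equation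
  \<open>x\<^sub>i \<Sum>d = d\<^sub>i\<close> then forces all distances to vanish.\<close>

lemma KKM_standard_simplex:
  fixes C :: "nat \<Rightarrow> (nat \<Rightarrow> real) set"
  assumes closed: "\<And>i. i \<le> n \<Longrightarrow> closed (C i)"
    and cover: "\<And>x. x \<in> standard_simplex n \<Longrightarrow> \<exists>i\<le>n. 0 < x i \<and> x \<in> C i"
  shows "\<exists>x\<in>standard_simplex n. \<forall>i\<le>n. x \<in> C i"
proof -
  have nonempty: "C i \<noteq> {}" if "i \<le> n" for i
    using cover[of "\<lambda>j. if j = i then 1 else 0"] that by (auto split: if_splits)
  define d where "d x i = infdist x (C i)" for x i
  define s where "s x = (\<Sum>j\<le>n. d x j)" for x
  define f where "f x = (\<lambda>i. if i \<le> n then (x i + d x i) / (1 + s x) else 0)" for x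
  have d_nonneg: "0 \<le> d x i" for x i by (simp add: d_def infdist_nonneg)
  then have s_nonneg: "0 \<le> s x" for x unfolding s_def by (intro sum_nonneg)
  have "continuous_on (standard_simplex n) f"
    unfolding f_def s_def d_def
    by (intro continuous_on_standard_simplex_add_normalise continuous_on_infdist continuous_on_id)
      (simp add: infdist_nonneg)
  moreover have "f \<in> standard_simplex n \<rightarrow> standard_simplex n"
    unfolding f_def s_def by (auto intro!: standard_simplex_add_normalise d_nonneg)
  ultimately obtain x where x: "x \<in> standard_simplex n" "f x = x"
    by (rule brouwer_standard_simplex)
  have fixed: "x i * s x = d x i" if "i \<le> n" for i
  proof -
    have "(x i + d x i) / (1 + s x) = x i" using x(2) that by (metis f_def)
    then show ?thesis using s_nonneg[of x] by (simp add: divide_eq_eq algebra_simps add_nonneg_eq_0_iff)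
  qed
  obtain i where "i \<le> n" "0 < x i" "x \<in> C i" using cover[OF x(1)] by blast
  then have "s x = 0" using fixed[of i] by (simp add: d_def)
  then have "d x j = 0" if "j \<le> n" for j
    using that d_nonneg unfolding s_def by (simp add: sum_nonneg_eq_0_iff)
  then have "x \<in> closure (C j)" if "j \<le> n" for j
    using in_closure_iff_infdist_zero[OF nonempty] that by (simp add: d_def)
  then show ?thesis using x(1) closed by (metis closure_closed)
qed

section \<open>The KKM principle in topological vector spaces\<close>

lemma continuous_on_add_tvs:
  fixes f g :: "'c::topological_space \<Rightarrow> 'a::real_topological_vector"
  assumes f: "continuous_on S f" and g: "continuous_on S g"
  shows "continuous_on S (\<lambda>x. f x + g x)"
  unfolding continuous_on_topological
proof (intro ballI allI impI)
  fix x B assume x: "x \<in> S" and B: "open B" "f x + g x \<in> B"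
  obtain U V where UV: "open U" "open V" "f x \<in> U" "g x \<in> V" "\<forall>u\<in>U. \<forall>v\<in>V. u + v \<in> B"
    using add_continuous_tvs[OF B] by blast
  obtain A1 where A1: "open A1" "x \<in> A1" "\<forall>y\<in>S. y \<in> A1 \<longrightarrow> f y \<in> U"
    using f x UV unfolding continuous_on_topological by metis
  obtain A2 where A2: "open A2" "x \<in> A2" "\<forall>y\<in>S. y \<in> A2 \<longrightarrow> g y \<in> V"
    using g x UV unfolding continuous_on_topological by metis
  show "\<exists>A. open A \<and> x \<in> A \<and> (\<forall>y\<in>S. y \<in> A \<longrightarrow> f y + g y \<in> B)"
    by (rule exI[of _ "A1 \<inter> A2"]) (use A1 A2 UV in auto)
qed

lemma continuous_on_sum_tvs:
  fixes h :: "'i \<Rightarrow> 'c::topological_space \<Rightarrow> 'a::real_topological_vector"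
  assumes "\<And>i. i \<in> I \<Longrightarrow> continuous_on S (h i)"
  shows "continuous_on S (\<lambda>x. \<Sum>i\<in>I. h i x)"
  using assms
proof (induction I rule: infinite_finite_induct)
  case (insert a I)
  then show ?case by (simp add: continuous_on_add_tvs)
qed (simp_all add: continuous_on_const)

lemma continuous_on_scaleR_const_tvs:
  fixes g :: "'c::topological_space \<Rightarrow> real" and v :: "'a::real_topological_vector"
  assumes g: "continuous_on S g"
  shows "continuous_on S (\<lambda>x. g x *\<^sub>R v)"
  unfolding continuous_on_topological
proof (intro ballI allI impI)
  fix x B assume x: "x \<in> S" and B: "open B" "g x *\<^sub>R v \<in> B"
  obtain A U where AU: "open A" "g x \<in> A" "v \<in> U" "\<forall>c\<in>A. \<forall>u\<in>U. c *\<^sub>R u \<in> B"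
    using scaleR_continuous_tvs[OF B] by blast
  obtain A1 where "open A1" "x \<in> A1" "\<forall>y\<in>S. y \<in> A1 \<longrightarrow> g y \<in> A"
    using g x AU unfolding continuous_on_topological by metis
  with AU show "\<exists>A. open A \<and> x \<in> A \<and> (\<forall>y\<in>S. y \<in> A \<longrightarrow> g y *\<^sub>R v \<in> B)"
    by blast
qed

lemma convex_combination_in_convex_hull:
  assumes l: "l \<in> standard_simplex n"
  shows "(\<Sum>i\<le>n. l i *\<^sub>R z i) \<in> convex hull (z ` {i. i \<le> n \<and> 0 < l i})"
proof -
  define J where "J = {i. i \<le> n \<and> 0 < l i}"
  have J: "J \<subseteq> {..n}" "finite J" by (auto simp: J_def)
  have zero: "l i = 0" if "i \<in> {..n} - J" for i
    using that l by (auto simp: J_def mem_standard_simplex less_le)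
  have "(\<Sum>i\<le>n. l i *\<^sub>R z i) = (\<Sum>i\<in>J. l i *\<^sub>R z i)"
    by (rule sum.mono_neutral_right) (use J zero in auto)
  moreover have "(\<Sum>i\<in>J. l i) = (\<Sum>i\<le>n. l i)"
    by (rule sum.mono_neutral_left) (use J zero in auto)
  then have "(\<Sum>i\<in>J. l i) = 1" using l by (simp add: mem_standard_simplex)
  then have "(\<Sum>i\<in>J. l i *\<^sub>R z i) \<in> convex hull (z ` J)"
    using l J(2) by (intro convex_sum convex_convex_hull) (auto simp: J_def mem_standard_simplex intro: hull_inc)
  ultimately show ?thesis by (simp add: J_def)
qed

text \<open>Compact closedness suffices because the covering is pulled back along the continuous map
  \<open>l \<mapsto> \<Sum> l\<^sub>i z\<^sub>i\<close>, whose image of the standard simplex is compact.\<close>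

lemma KKM_nat_tvs:
  fixes z :: "nat \<Rightarrow> 'a::real_topological_vector" and G :: "nat \<Rightarrow> 'a set"
  assumes closed: "\<And>i. i \<le> n \<Longrightarrow> compactly_closed (G i)"
    and cover: "\<And>J. J \<subseteq> {..n} \<Longrightarrow> convex hull (z ` J) \<subseteq> (\<Union>j\<in>J. G j)"
  shows "\<exists>x. \<forall>i\<le>n. x \<in> G i"
proof -
  define \<phi> where "\<phi> l = (\<Sum>i\<le>n. l i *\<^sub>R z i)" for l :: "nat \<Rightarrow> real"
  define C where "C i = {l \<in> standard_simplex n. \<phi> l \<in> G i}" for i
  have \<phi>_cont: "continuous_on (standard_simplex n) \<phi>"
    unfolding \<phi>_def
    by (intro continuous_on_sum_tvs continuous_on_scaleR_const_tvs continuous_on_coordinate)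
  have "closed (C i)" if "i \<le> n" for i
  proof -
    let ?K = "\<phi> ` standard_simplex n"
    have "compact (standard_simplex n)"
      using compactin_standard_simplex by (simp add: euclidean_product_topology)
    then have "closedin (top_of_set ?K) (G i \<inter> ?K)"
      using closed[OF that] compact_continuous_image[OF \<phi>_cont]
      unfolding compactly_closed_def by blast
    moreover have "C i = standard_simplex n \<inter> \<phi> -` (G i \<inter> ?K)"
      by (auto simp: C_def)
    ultimately have "closedin (top_of_set (standard_simplex n)) (C i)"
      using continuous_closedin_preimage_gen[OF \<phi>_cont, of ?K "G i \<inter> ?K"] by simp
    then show ?thesis
      using closedin_closed_trans \<open>compact (standard_simplex n)\<close> compact_imp_closed by blast
  qed
  moreover have "\<exists>i\<le>n. 0 < l i \<and> l \<in> C i" if l: "l \<in> standard_simplex n" for l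
  proof -
    have "\<phi> l \<in> (\<Union>j\<in>{i. i \<le> n \<and> 0 < l i}. G j)"
      using convex_combination_in_convex_hull[OF l] cover[of "{i. i \<le> n \<and> 0 < l i}"]
      by (auto simp: \<phi>_def)
    then show ?thesis using l by (auto simp: C_def)
  qed
  ultimately obtain l where "\<forall>i\<le>n. l \<in> C i"
    using KKM_standard_simplex[of n C] by blast
  then show ?thesis by (auto simp: C_def)
qed

lemma KKM_tvs:
  fixes z :: "'i \<Rightarrow> 'a::real_topological_vector" and G :: "'i \<Rightarrow> 'a set"
  assumes "finite I"
    and closed: "\<And>i. i \<in> I \<Longrightarrow> compactly_closed (G i)"
    and cover: "\<And>J. J \<subseteq> I \<Longrightarrow> convex hull (z ` J) \<subseteq> (\<Union>j\<in>J. G j)"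
  shows "\<exists>x. \<forall>i\<in>I. x \<in> G i"
proof (cases "I = {}")
  case False
  obtain e where e: "bij_betw e {0..<card I} I"
    using ex_bij_betw_nat_finite[OF \<open>finite I\<close>] by blast
  define n where "n = card I - 1"
  have "card I > 0" using False \<open>finite I\<close> by (simp add: card_gt_0_iff)
  then have n: "{..n} = {0..<card I}" by (auto simp: n_def)
  then have e_range: "e ` {..n} = I"
    using e by (simp add: bij_betw_def)
  have "\<exists>x. \<forall>k\<le>n. x \<in> G (e k)"
  proof (rule KKM_nat_tvs)
    show "compactly_closed (G (e k))" if "k \<le> n" for k
      using closed e_range that by blast
    show "convex hull ((z \<circ> e) ` J) \<subseteq> (\<Union>j\<in>J. G (e j))" if "J \<subseteq> {..n}" for J
      using cover[of "e ` J"] that e_range by (auto simp: image_comp)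
  qed
  then show ?thesis using e_range by auto
qed simp

lemma KKM_type_finite_intersection:
  fixes D :: "'a::real_topological_vector set" and F :: "'a \<Rightarrow> 'a \<Rightarrow> 'b::zero set"
  assumes "convex D"
    and closed: "\<forall>z\<in>D. compactly_closed {x \<in> D. 0 \<in> F x z}"
    and KKM: "KKM_type D F"
    and transfer: "\<forall>y\<in>D. \<exists>z\<in>D. \<forall>x\<in>D. 0 \<in> F z x \<longrightarrow> 0 \<in> F x y"
    and Y: "finite Y" "Y \<noteq> {}" "Y \<subseteq> D"
  shows "\<exists>x\<in>D. \<forall>y\<in>Y. 0 \<in> F x y"
proof -
  obtain z where z: "\<And>y. y \<in> D \<Longrightarrow> z y \<in> D"
    "\<And>y x. y \<in> D \<Longrightarrow> x \<in> D \<Longrightarrow> 0 \<in> F (z y) x \<Longrightarrow> 0 \<in> F x y"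
    using transfer by metis
  have "\<exists>x. \<forall>y\<in>Y. x \<in> {x \<in> D. 0 \<in> F x y}"
  proof (rule KKM_tvs[OF \<open>finite Y\<close>])
    show "compactly_closed {x \<in> D. 0 \<in> F x y}" if "y \<in> Y" for y
      using closed Y(3) that by blast
    show "convex hull (z ` J) \<subseteq> (\<Union>y\<in>J. {x \<in> D. 0 \<in> F x y})" if J: "J \<subseteq> Y" for J
    proof
      fix x assume x: "x \<in> convex hull (z ` J)"
      have "z ` J \<subseteq> D" "finite (z ` J)" using J Y z(1) finite_subset[OF J] by auto
      moreover from this have "x \<in> D"
        using x hull_minimal[of "z ` J" D convex] \<open>convex D\<close> by blast
      ultimately obtain y where "y \<in> J" "0 \<in> F (z y) x"
        using KKM x unfolding KKM_type_def by blast
      then show "x \<in> (\<Union>y\<in>J. {x \<in> D. 0 \<in> F x y})"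
        using z(2) J Y(3) \<open>x \<in> D\<close> by blast
    qed
  qed
  then show ?thesis using Y(2) by blast
qed

theorem corollary2p5:
  fixes D :: "'a::real_topological_vector set"
    and F :: "'a \<Rightarrow> 'a \<Rightarrow> 'b::real_topological_vector set"
    and M L :: "'a set"
  assumes "D \<noteq> {}" and "convex D"
    and i: "\<forall>z\<in>D. compactly_closed {x \<in> D. 0 \<in> F x z}"
    and ii: "KKM_type D F"
    and iii: "\<forall>y\<in>D. \<exists>z\<in>D. \<forall>x\<in>D. 0 \<in> F z x \<longrightarrow> 0 \<in> F x y"
    and iv: "M \<noteq> {}" "compact M" "M \<subseteq> D" "finite L" "L \<subseteq> D"
            "\<forall>x \<in> D - M. \<exists>y\<in>L. 0 \<notin> F x y"
  shows "\<exists>xbar \<in> M. \<forall>y\<in>D. 0 \<in> F xbar y"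
proof -
  define A where "A y = {x \<in> M. 0 \<in> F x y}" for y
  have "closedin (top_of_set M) (A y)" if "y \<in> D" for y
  proof -
    have "{x \<in> D. 0 \<in> F x y} \<inter> M = A y" using iv(3) by (auto simp: A_def)
    then show ?thesis using i that iv(2) unfolding compactly_closed_def by metis
  qed
  moreover have "M \<inter> \<Inter>(A ` Y) \<noteq> {}" if Y: "finite Y" "Y \<subseteq> D" for Y
  proof -
    obtain d where "d \<in> D" using \<open>D \<noteq> {}\<close> by blast
    then obtain x where "x \<in> D" "\<forall>y\<in>insert d (Y \<union> L). 0 \<in> F x y"
      using KKM_type_finite_intersection[OF \<open>convex D\<close> i ii iii, of "insert d (Y \<union> L)"] Y iv by auto
    moreover from this have "x \<in> M" using iv(6) by blast
    ultimately show ?thesis by (auto simp: A_def)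
  qed
  moreover have "compactin (top_of_set M) M"
    using iv(2) by (simp add: compactin_subtopology)
  ultimately have "M \<inter> \<Inter>(A ` D) \<noteq> {}"
    unfolding compactin_fip by (metis (no_types, lifting) finite_subset_image imageE)
  then show ?thesis by (auto simp: A_def)
qed

end
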